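(* In the basic model with an odd number $n$ of agents: - the leader election problem and the nontrivial move problem can each be solved in $O(\log N)$ rounds; - the location discovery problem can be solved in $n+O(\log N)$ rounds.
   Context: Model (basic): $n>4$ agents are at distinct, arbitrary initial positions on a circle of circumference $1$ and act in synchronised unit-time rounds. Each agent has its own notion of right (clockwise) and left; these need not be consistent across agents. At the start of each round every agent chooses a direction in $\{\text{right},\text{left}\}$ and moves at unit speed. Agents never pass: colliding agents instantly reverse direction. There is no communication. At the end of a round each agent learns only the clockwise distance, in its own orientation, from its start to its end position. Agents have distinct IDs in $\{1,\dots,N\}$, $N\ge n$ known, and know the parity of $n$. Rotation index: if $n_C$ agents start clockwise and $n_A$ anticlockwise (objective orientation), each agent moves to the initial position of the agent $(n_C-n_A)\bmod n$ places clockwise. A nontrivial move is a round with rotation index not in $\{0,n/2\}$. Problems: - Nontrivial move problem: assign each agent a direction so that the round in which all start in these directions is a nontrivial move. - Leader election: exactly one agent is "leader". - Location discovery: each agent determines the initial positions of all other agents relative to its own initial position. *)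

theory Defs
  imports Complex_Main
begin

(* Circle of circumference 1: points are reals in [0,1), measured clockwise
   (objective orientation) from a fixed origin. *)

definition cwdist :: "real \<Rightarrow> real \<Rightarrow> real" where
  "cwdist a b = frac (b - a)"

(* clockwise distance from a to b in the orientation of an agent whose
   chirality is c (c = True: the agent's "right" is the objective clockwise) *)
definition owndist :: "bool \<Rightarrow> real \<Rightarrow> real \<Rightarrow> real" where
  "owndist c a b = (if c then cwdist a b else cwdist b a)"

(* rotation index of a round with n agents, cw i = agent i starts objectively clockwise *)
definition rot_index :: "nat \<Rightarrow> (nat \<Rightarrow> bool) \<Rightarrow> nat" where
  "rot_index n cw =
     nat ((int (card {i. i < n \<and> cw i}) - int (card {i. i < n \<and> \<not> cw i})) mod int n)"

definition nontrivial_index :: "nat \<Rightarrow> nat \<Rightarrow> bool" where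
  "nontrivial_index n r \<longleftrightarrow> r \<noteq> 0 \<and> 2 * r \<noteq> n"

definition valid_config :: "nat \<Rightarrow> nat \<Rightarrow> (nat \<Rightarrow> real) \<Rightarrow> (nat \<Rightarrow> nat) \<Rightarrow> bool" where
  "valid_config N n q idf \<longleftrightarrow>
     n > 4 \<and> n \<le> N \<and>
     (\<forall>i<n. 0 \<le> q i \<and> q i < 1) \<and>
     (\<forall>i j. i < j \<and> j < n \<longrightarrow> q i < q j) \<and>
     inj_on idf {..<n} \<and> (\<forall>i<n. idf i \<in> {1..N})"

(* Execution. mv id hist = direction chosen (True = own right) by the agent with ID id
   after observation history hist. Returns, after t rounds, the slot (index of the
   initial position) currently occupied by each agent, and each agent's history of
   observations. *)
primrec run :: "nat \<Rightarrow> (nat \<Rightarrow> real) \<Rightarrow> (nat \<Rightarrow> bool) \<Rightarrow> (nat \<Rightarrow> nat)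
     \<Rightarrow> (nat \<Rightarrow> real list \<Rightarrow> bool) \<Rightarrow> nat \<Rightarrow> (nat \<Rightarrow> nat) \<times> (nat \<Rightarrow> real list)" where
  "run n q c idf mv 0 = ((\<lambda>i. i), (\<lambda>i. []))"
| "run n q c idf mv (Suc t) =
     (let s = fst (run n q c idf mv t);
          h = snd (run n q c idf mv t);
          r = rot_index n (\<lambda>i. mv (idf i) (h i) = c i);
          s' = (\<lambda>i. (s i + r) mod n)
      in (s', (\<lambda>i. h i @ [owndist (c i) (q (s i)) (q (s' i))])))"

definition hist :: "nat \<Rightarrow> (nat \<Rightarrow> real) \<Rightarrow> (nat \<Rightarrow> bool) \<Rightarrow> (nat \<Rightarrow> nat)
     \<Rightarrow> (nat \<Rightarrow> real list \<Rightarrow> bool) \<Rightarrow> nat \<Rightarrow> nat \<Rightarrow> real list" where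
  "hist n q c idf mv t i = snd (run n q c idf mv t) i"

definition decides ::
  "nat \<Rightarrow> (nat \<Rightarrow> real) \<Rightarrow> (nat \<Rightarrow> bool) \<Rightarrow> (nat \<Rightarrow> nat)
   \<Rightarrow> (nat \<Rightarrow> real list \<Rightarrow> bool) \<Rightarrow> (nat \<Rightarrow> real list \<Rightarrow> 'o option)
   \<Rightarrow> nat \<Rightarrow> nat \<Rightarrow> 'o \<Rightarrow> bool" where
  "decides n q c idf mv out T i v \<longleftrightarrow>
     (\<exists>t\<le>T. out (idf i) (hist n q c idf mv t i) = Some v \<and>
        (\<forall>t'<t. out (idf i) (hist n q c idf mv t' i) = None))"

definition solves_odd ::
  "(nat \<Rightarrow> nat \<Rightarrow> real list \<Rightarrow> bool) \<Rightarrow> (nat \<Rightarrow> nat \<Rightarrow> real list \<Rightarrow> 'o option)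
   \<Rightarrow> (nat \<Rightarrow> (nat \<Rightarrow> real) \<Rightarrow> (nat \<Rightarrow> bool) \<Rightarrow> (nat \<Rightarrow> 'o) \<Rightarrow> bool)
   \<Rightarrow> (nat \<Rightarrow> nat \<Rightarrow> nat) \<Rightarrow> bool" where
  "solves_odd mv out spec bound \<longleftrightarrow>
     (\<forall>N n q c idf. valid_config N n q idf \<and> odd n \<longrightarrow>
        (\<exists>dec. (\<forall>i<n. decides n q c idf (mv N) (out N) (bound N n) i (dec i))
               \<and> spec n q c dec))"

definition leader_spec :: "nat \<Rightarrow> (nat \<Rightarrow> real) \<Rightarrow> (nat \<Rightarrow> bool) \<Rightarrow> (nat \<Rightarrow> bool) \<Rightarrow> bool" where
  "leader_spec n q c dec \<longleftrightarrow> card {i. i < n \<and> dec i} = 1"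

(* dec i = direction (True = own right) assigned to agent i *)
definition nontrivial_move_spec :: "nat \<Rightarrow> (nat \<Rightarrow> real) \<Rightarrow> (nat \<Rightarrow> bool) \<Rightarrow> (nat \<Rightarrow> bool) \<Rightarrow> bool" where
  "nontrivial_move_spec n q c dec \<longleftrightarrow> nontrivial_index n (rot_index n (\<lambda>i. dec i = c i))"

definition location_spec :: "nat \<Rightarrow> (nat \<Rightarrow> real) \<Rightarrow> (nat \<Rightarrow> bool) \<Rightarrow> (nat \<Rightarrow> real set) \<Rightarrow> bool" where
  "location_spec n q c dec \<longleftrightarrow>
     (\<forall>i<n. dec i = {owndist (c i) (q i) (q j) | j. j < n \<and> j \<noteq> i})"

end

theory Submission
  imports Defs
begin

text \<open>The agents cannot communicate, but every agent can read the rotation index of a round off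
  its own observation. Following each round by its reverse keeps everybody at home, so a round
  broadcasts one bit: whether letting a set \<open>S\<close> of agents flip their direction changes the
  rotation index, which for odd \<open>n\<close> means that the chirality-weighted size of \<open>S\<close> is not a
  multiple of \<open>n\<close>. With \<open>O(log N)\<close> such bits the agents find a bit-group of IDs of nonzero
  weight and binary-search it for an ID where the weight of the IDs below it jumps; its owner is
  the leader. When the leader alone flips, each agent learns whether its chirality agrees with the
  leader's. Finally everybody moves in the leader's left direction except the leader, a round of
  rotation index \<open>\<plusminus>2\<close>, coprime to \<open>n\<close>: a nontrivial move, and repeating it \<open>n\<close> times carries
  each agent once around all positions, which it reconstructs by summing its observations.\<close>

section \<open>Executions and rotation indices\<close>

lemma run_Suc_slot:
  "fst (run n q c idf mv (Suc t)) i =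
   (fst (run n q c idf mv t) i + rot_index n (\<lambda>j. mv (idf j) (snd (run n q c idf mv t) j) = c j)) mod n"
  by (simp add: Let_def)

lemma length_run_history: "length (snd (run n q c idf mv t) i) = t"
  by (induction t) (auto simp: Let_def)

lemma butlast_run_history: "butlast (snd (run n q c idf mv (Suc t)) i) = snd (run n q c idf mv t) i"
  by (simp add: Let_def)

lemma take_run_history:
  "t \<le> t' \<Longrightarrow> take t (snd (run n q c idf mv t') i) = snd (run n q c idf mv t) i"
proof (induction t')
  case 0
  then show ?case by simp
next
  case (Suc t')
  show ?case
  proof (cases "t = Suc t'")
    case True
    then show ?thesis by (metis length_run_history order_refl take_all)
  next
    case False
    then have "t \<le> t'" using Suc by simp
    then show ?thesis using Suc.IH length_run_history[of n q c idf mv t' i]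
      by (simp add: Let_def)
  qed
qed

lemma nth_run_history:
  assumes "k < t"
  shows "snd (run n q c idf mv t) i ! k =
    owndist (c i) (q (fst (run n q c idf mv k) i))
      (q (fst (run n q c idf mv (Suc k)) i))"
proof -
  have "snd (run n q c idf mv t) i ! k = take (Suc k) (snd (run n q c idf mv t) i) ! k"
    by simp
  also have "\<dots> = snd (run n q c idf mv (Suc k)) i ! k"
    using assms take_run_history[of "Suc k" t] by simp
  finally show ?thesis
    using length_run_history[of n q c idf mv k i] by (simp add: Let_def nth_append)
qed

declare run.simps(2) [simp del]

definition signed_count :: "nat \<Rightarrow> (nat \<Rightarrow> bool) \<Rightarrow> int" where
  "signed_count n P = (\<Sum>i<n. if P i then 1 else -1)"

lemma card_diff_eq_signed_count:
  "int (card {i. i < n \<and> P i}) - int (card {i. i < n \<and> \<not> P i}) = signed_count n P"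
proof (induction n)
  case 0
  then show ?case by (simp add: signed_count_def)
next
  case (Suc n)
  have "{i. i < Suc n \<and> P i} =
      (if P n then insert n {i. i < n \<and> P i} else {i. i < n \<and> P i})"
    "{i. i < Suc n \<and> \<not> P i} =
      (if P n then {i. i < n \<and> \<not> P i} else insert n {i. i < n \<and> \<not> P i})"
    by (auto simp: less_Suc_eq)
  then show ?case using Suc by (auto simp: signed_count_def)
qed

lemma signed_count_not: "signed_count n (\<lambda>i. \<not> P i) = - signed_count n P"
  by (simp add: signed_count_def sum_negf[symmetric] if_distrib cong: if_cong)
    (rule sum.cong, auto)

lemma int_rot_index: "0 < n \<Longrightarrow> int (rot_index n P) = signed_count n P mod int n"
  unfolding rot_index_def card_diff_eq_signed_count by simp

lemma rot_index_less: "0 < n \<Longrightarrow> rot_index n P < n"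
  unfolding rot_index_def card_diff_eq_signed_count by (simp add: nat_less_iff)

lemma rot_index_cong: "(\<And>j. j < n \<Longrightarrow> P j = P' j) \<Longrightarrow> rot_index n P = rot_index n P'"
proof -
  assume "\<And>j. j < n \<Longrightarrow> P j = P' j"
  then have "{i. i < n \<and> P i} = {i. i < n \<and> P' i}" "{i. i < n \<and> \<not> P i} = {i. i < n \<and> \<not> P' i}"
    by auto
  then show ?thesis unfolding rot_index_def by simp
qed

lemma rot_index_eq_iff:
  assumes "0 < n"
  shows "rot_index n P = rot_index n P' \<longleftrightarrow> int n dvd (signed_count n P - signed_count n P')"
proof -
  have "rot_index n P = rot_index n P' \<longleftrightarrow> int (rot_index n P) = int (rot_index n P')"
    by simp
  also have "\<dots> \<longleftrightarrow> int n dvd (signed_count n P - signed_count n P')"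
    unfolding int_rot_index[OF assms] by (rule mod_eq_dvd_iff)
  finally show ?thesis .
qed

lemma rot_index_eq_0_iff: "0 < n \<Longrightarrow> rot_index n P = 0 \<longleftrightarrow> int n dvd signed_count n P"
  using int_rot_index[of n P] by (auto simp: dvd_eq_mod_eq_0)

lemma pm_one_sum_abs_le_and_parity:
  assumes "\<forall>i<m. w i = 1 \<or> w i = (-1::int)"
  shows "\<bar>\<Sum>i<m. w i\<bar> \<le> int m \<and> even ((\<Sum>i<m. w i) - int m)"
  using assms
proof (induction m)
  case 0
  then show ?case by simp
next
  case (Suc m)
  then have "\<bar>\<Sum>i<m. w i\<bar> \<le> int m" "even ((\<Sum>i<m. w i) - int m)" "w m = 1 \<or> w m = -1"
    by auto
  moreover have "(\<Sum>i<Suc m. w i) - int (Suc m) = ((\<Sum>i<m. w i) - int m) + (w m - 1)"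
    by simp
  moreover have "\<bar>\<Sum>i<Suc m. w i\<bar> \<le> \<bar>\<Sum>i<m. w i\<bar> + \<bar>w m\<bar>"
    by (simp add: abs_triangle_ineq)
  ultimately show ?case by (elim disjE) simp_all
qed

lemma pm_one_sum_eq_imp_all_one:
  assumes "\<forall>i<m. w i = 1 \<or> w i = (-1::int)" and "(\<Sum>i<m. w i) = int m"
  shows "\<forall>i<m. w i = 1"
proof -
  have "(\<Sum>i<m. 1 - w i) = 0" and "\<forall>i\<in>{..<m}. 0 \<le> 1 - w i"
    using assms by (auto simp: sum_subtractf)
  then have "\<forall>i\<in>{..<m}. 1 - w i = 0"
    using sum_nonneg_eq_0_iff[of "{..<m}" "\<lambda>i. 1 - w i"] by simp
  then show ?thesis by simp
qed

text \<open>A sum of an odd number of signs is odd and at most the number of terms, so it is a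
  multiple of that number only if all signs agree.\<close>

lemma pm_one_sum_dvd_imp_constant:
  assumes "odd n" and pm: "\<forall>i<n. w i = 1 \<or> w i = (-1::int)" and "int n dvd (\<Sum>i<n. w i)"
  shows "(\<forall>i<n. w i = 1) \<or> (\<forall>i<n. w i = -1)"
proof -
  let ?x = "\<Sum>i<n. w i"
  from assms(3) obtain k where k: "?x = int n * k" by (rule dvdE)
  have bound: "\<bar>?x\<bar> \<le> int n" and "even (?x - int n)"
    using pm_one_sum_abs_le_and_parity[OF pm] by auto
  then have "odd ?x" using \<open>odd n\<close> by simp
  then have "k \<noteq> 0" using k by (metis mult_zero_right even_zero)
  moreover have "\<bar>k\<bar> \<le> 1"
  proof (rule ccontr)
    assume "\<not> \<bar>k\<bar> \<le> 1"
    then have "\<bar>k\<bar> \<ge> 2" by simp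
    then have "\<bar>?x\<bar> \<ge> int n * 2" using k by (simp add: abs_mult mult_left_mono)
    moreover have "0 < n" using \<open>odd n\<close> by (rule odd_pos)
    ultimately show False using bound by simp
  qed
  ultimately have "k = 1 \<or> k = -1" by auto
  then show ?thesis
  proof
    assume "k = 1"
    then have "?x = int n" using k by simp
    then show ?thesis using pm_one_sum_eq_imp_all_one[OF pm] by simp
  next
    assume "k = -1"
    have "\<forall>i<n. - w i = 1 \<or> - w i = -1" using pm by auto
    moreover have "(\<Sum>i<n. - w i) = int n" using k \<open>k = -1\<close> by (simp add: sum_negf)
    ultimately have "\<forall>i<n. - w i = 1" by (rule pm_one_sum_eq_imp_all_one)
    then show ?thesis by auto
  qed
qed

lemma exists_bit_differs:
  "(a::nat) \<noteq> b \<Longrightarrow> a < 2 ^ B \<Longrightarrow> b < 2 ^ B \<Longrightarrow> \<exists>k<B. odd (a div 2 ^ k) \<noteq> odd (b div 2 ^ k)"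
proof (induction B arbitrary: a b)
  case 0
  then show ?case by auto
next
  case (Suc B)
  show ?case
  proof (cases "odd a = odd b")
    case False
    then show ?thesis by (intro exI[of _ 0]) simp
  next
    case True
    have "a div 2 \<noteq> b div 2"
    proof
      assume "a div 2 = b div 2"
      moreover have "a mod 2 = b mod 2" using True by presburger
      ultimately have "2 * (a div 2) + a mod 2 = 2 * (b div 2) + b mod 2" by simp
      then show False using Suc.prems(1) by simp
    qed
    moreover have "a div 2 < 2 ^ B" "b div 2 < 2 ^ B" using Suc.prems by auto
    ultimately obtain k where "k < B" "odd (a div 2 div 2 ^ k) \<noteq> odd (b div 2 div 2 ^ k)"
      using Suc.IH by blast
    then show ?thesis by (intro exI[of _ "Suc k"]) (simp add: div_mult2_eq)
  qed
qed

definition bit_length :: "nat \<Rightarrow> nat" where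
  "bit_length N = (LEAST b. N < 2 ^ b)"

lemma less_two_power_bit_length: "N < 2 ^ bit_length N"
  unfolding bit_length_def by (rule LeastI[of _ N]) simp

lemma two_power_bit_length_le: "0 < bit_length N \<Longrightarrow> 2 ^ (bit_length N - 1) \<le> N"
proof -
  assume "0 < bit_length N"
  then have "\<not> N < 2 ^ (bit_length N - 1)"
    unfolding bit_length_def using not_less_Least diff_less zero_less_one by blast
  then show ?thesis by simp
qed

lemma bit_length_le_log: "5 \<le> N \<Longrightarrow> real (bit_length N) \<le> log 2 (real N) + 1"
proof -
  assume "5 \<le> N"
  then have pos: "0 < bit_length N"
    using less_two_power_bit_length[of N] by (cases "bit_length N") auto
  then have "real (bit_length N - 1) \<le> log 2 (real N)"
    using le_log2_of_power[OF two_power_bit_length_le[OF pos]] by simp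
  then show ?thesis using pos by (simp add: of_nat_diff)
qed

lemma frac_sum_frac: "frac (\<Sum>l<(m::nat). frac (f l)) = frac (\<Sum>l<m. (f l :: real))"
proof (induction m)
  case 0
  then show ?case by simp
next
  case (Suc m)
  have "frac (\<Sum>l<Suc m. frac (f l)) = frac (frac (\<Sum>l<m. frac (f l)) + f m)"
    by simp
  also have "\<dots> = frac (frac (\<Sum>l<m. f l) + f m)" using Suc by simp
  also have "\<dots> = frac (\<Sum>l<Suc m. f l)" by simp
  finally show ?case .
qed

lemma sum_list_take_drop:
  assumes "T + m \<le> length h"
  shows "sum_list (take m (drop T h)) = (\<Sum>l<m. h ! (T + l))"
proof -
  have "sum_list (take m (drop T h)) = (\<Sum>l<m. take m (drop T h) ! l)"
    using assms by (simp add: sum_list_sum_nth atLeast0LessThan)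
  also have "\<dots> = (\<Sum>l<m. h ! (T + l))" using assms by (intro sum.cong) auto
  finally show ?thesis .
qed

definition oriented :: "bool \<Rightarrow> real \<Rightarrow> real" where
  "oriented b v = (if b then v else - v)"

lemma owndist_oriented: "owndist b x z = frac (oriented b (z - x))"
  by (simp add: owndist_def cwdist_def oriented_def)

lemma oriented_diff: "oriented b u - oriented b v = oriented b (u - v)"
  by (simp add: oriented_def)

section \<open>Observations\<close>

locale config =
  fixes N n :: nat and q :: "nat \<Rightarrow> real" and c :: "nat \<Rightarrow> bool" and idf :: "nat \<Rightarrow> nat"
  assumes valid: "valid_config N n q idf"
begin

lemma n_gt_4: "4 < n"
  and q_range: "\<And>i. i < n \<Longrightarrow> 0 \<le> q i \<and> q i < 1"
  and q_strict_mono: "\<And>i j. i < j \<Longrightarrow> j < n \<Longrightarrow> q i < q j"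
  and inj_idf: "inj_on idf {..<n}" and idf_range: "\<And>i. i < n \<Longrightarrow> idf i \<in> {1..N}"
  using valid unfolding valid_config_def by auto

lemma n_pos: "0 < n"
  using n_gt_4 by simp

lemma idf_less_two_power: "i < n \<Longrightarrow> idf i < 2 ^ bit_length N"
  using idf_range[of i] less_two_power_bit_length[of N] by auto

lemma owndist_eq_0_iff:
  assumes "i < n" "j < n"
  shows "owndist b (q i) (q j) = 0 \<longleftrightarrow> i = j"
proof
  assume "owndist b (q i) (q j) = 0"
  then have "oriented b (q j - q i) \<in> \<int>" by (simp add: owndist_oriented)
  then have "q j - q i \<in> \<int>" by (cases b) (auto simp: oriented_def dest: Ints_minus)
  then obtain z where z: "q j - q i = of_int z" by (auto elim: Ints_cases)
  have "\<bar>q j - q i\<bar> < 1" using q_range[OF assms(1)] q_range[OF assms(2)] by auto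
  then have "z = 0" using z by linarith
  then have "q j = q i" using z by simp
  then show "i = j" using q_strict_mono assms by (metis linorder_neqE_nat order_less_irrefl)
qed (simp add: owndist_def cwdist_def)

definition gap :: "nat \<Rightarrow> nat \<Rightarrow> real" where
  "gap i r = cwdist (q i) (q ((i + r) mod n))"

lemma gap_explicit:
  assumes "i < n" "r < n"
  shows "gap i r = (if i + r < n then q (i + r) - q i else 1 + q (i + r - n) - q i)"
proof (cases "i + r < n")
  case True
  then have "q i \<le> q (i + r)" using q_strict_mono[of i "i + r"] by (cases "r = 0") auto
  moreover have "q (i + r) - q i < 1" using q_range[of i] q_range[of "i + r"] True assms by auto
  ultimately show ?thesis using True unfolding gap_def cwdist_def by (simp add: frac_eq)
next
  case False
  then have wrap: "(i + r) mod n = i + r - n" and lt: "i + r - n < i" using assms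
    by (simp_all add: mod_if)
  have "q (i + r - n) < q i" using q_strict_mono[OF lt] assms by simp
  moreover have "q (i + r - n) - q i > -1" using q_range[of i] q_range[of "i + r - n"] assms lt
    by auto
  ultimately have "frac (q (i + r - n) - q i) = 1 + q (i + r - n) - q i"
    by (subst frac_unique_iff) auto
  then show ?thesis using False by (simp add: gap_def cwdist_def wrap)
qed

lemma gap_less_1: "gap i r < 1"
  by (simp add: gap_def cwdist_def frac_lt_1)

lemma gap_strict_mono:
  assumes "i < n" "r1 < r2" "r2 < n"
  shows "gap i r1 < gap i r2"
proof -
  have r1: "r1 < n" using assms by simp
  note explicit = gap_explicit[OF assms(1) r1] gap_explicit[OF assms(1) assms(3)]
  consider "i + r2 < n" | "i + r1 < n" "\<not> i + r2 < n" | "\<not> i + r1 < n"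
    using assms(2) by linarith
  then show ?thesis
  proof cases
    case 1
    then show ?thesis using explicit q_strict_mono[of "i + r1" "i + r2"] assms by auto
  next
    case 2
    then have "q (i + r1) < 1" "0 \<le> q (i + r2 - n)" using q_range assms by auto
    then show ?thesis using explicit 2 by auto
  next
    case 3
    then show ?thesis using explicit q_strict_mono[of "i + r1 - n" "i + r2 - n"] assms by auto
  qed
qed

lemma gap_pos: "i < n \<Longrightarrow> 0 < r \<Longrightarrow> r < n \<Longrightarrow> 0 < gap i r"
  using gap_strict_mono[of i 0 r] by (simp add: gap_def cwdist_def)

text \<open>\<open>obs i r\<close> is what agent \<open>i\<close> observes when, starting from its initial position, a round
  with rotation index \<open>r\<close> takes it \<open>r\<close> slots clockwise; in its own orientation that is a shift
  by \<open>own_shift i r\<close> slots.\<close>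

definition obs :: "nat \<Rightarrow> nat \<Rightarrow> real" where
  "obs i r = owndist (c i) (q i) (q ((i + r) mod n))"

definition own_shift :: "nat \<Rightarrow> nat \<Rightarrow> nat" where
  "own_shift i r = (if c i then r else (n - r) mod n)"

lemma obs_clockwise: "c i \<Longrightarrow> obs i r = gap i r"
  by (simp add: obs_def owndist_def gap_def)

lemma obs_anticlockwise:
  assumes "i < n" "r < n" "\<not> c i"
  shows "obs i r = (if r = 0 then 0 else 1 - gap i r)"
proof (cases "r = 0")
  case True
  then show ?thesis using assms by (simp add: obs_def owndist_def cwdist_def)
next
  case False
  then have "q ((i + r) mod n) - q i \<notin> \<int>"
    using gap_pos[of i r] assms by (auto simp: gap_def cwdist_def)
  then have "frac (- (q ((i + r) mod n) - q i)) = 1 - gap i r"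
    unfolding gap_def cwdist_def by (simp only: frac_neg if_False)
  then show ?thesis using assms False by (simp add: obs_def owndist_def cwdist_def)
qed

lemma own_shift_inj: "r1 < n \<Longrightarrow> r2 < n \<Longrightarrow> own_shift i r1 = own_shift i r2 \<Longrightarrow> r1 = r2"
  by (auto simp: own_shift_def mod_if split: if_splits)

lemma obs_less_iff:
  assumes "i < n" "r1 < n" "r2 < n"
  shows "obs i r1 < obs i r2 \<longleftrightarrow> own_shift i r1 < own_shift i r2"
proof (cases "c i")
  case True
  then show ?thesis using gap_strict_mono[OF assms(1)] assms
    by (simp add: obs_clockwise own_shift_def) (metis linorder_neqE_nat order_less_asym)
next
  case False
  consider "r1 = 0" | "r2 = 0" | "r1 \<noteq> 0" "r2 \<noteq> 0" by blast
  then show ?thesis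
  proof cases
    case 1
    then show ?thesis using False assms gap_less_1[of i r2]
      by (auto simp: obs_anticlockwise own_shift_def mod_if)
  next
    case 2
    then show ?thesis using False assms gap_less_1[of i r1]
      by (auto simp: obs_anticlockwise own_shift_def mod_if)
  next
    case 3
    then have "obs i r1 < obs i r2 \<longleftrightarrow> gap i r2 < gap i r1"
      using False assms by (simp add: obs_anticlockwise)
    also have "\<dots> \<longleftrightarrow> r2 < r1"
      by (metis gap_strict_mono assms linorder_neqE_nat order_less_asym)
    also have "\<dots> \<longleftrightarrow> own_shift i r1 < own_shift i r2"
      using False assms 3 by (auto simp: own_shift_def mod_if)
    finally show ?thesis .
  qed
qed

lemma obs_eq_iff:
  assumes "i < n" "r1 < n" "r2 < n"
  shows "obs i r1 = obs i r2 \<longleftrightarrow> r1 = r2"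
  using obs_less_iff[OF assms] obs_less_iff[OF assms(1) assms(3) assms(2)]
    own_shift_inj[OF assms(2,3)]
  by (metis linorder_neqE_nat order_less_irrefl)

lemma obs_eq_0_iff: "i < n \<Longrightarrow> r < n \<Longrightarrow> obs i r = 0 \<longleftrightarrow> r = 0"
  using obs_eq_iff[of i r 0] n_pos by (simp add: obs_def owndist_def cwdist_def)

end

section \<open>Weights and the search for an ID\<close>

text \<open>Group \<open>0\<close> contains every ID, group \<open>j + 1\<close> the IDs whose \<open>j\<close>-th bit is set.\<close>

definition in_group :: "nat \<Rightarrow> nat \<Rightarrow> bool" where
  "in_group j x = (if j = 0 then True else odd (x div 2 ^ (j - 1)))"

definition first_group :: "(nat \<Rightarrow> bool) \<Rightarrow> nat" where
  "first_group t = (LEAST j. t (Suc j))"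

text \<open>Binary search on \<open>[0, 2^B)\<close> driven by the answers \<open>t (B + 2 + k)\<close>; after \<open>k\<close> steps the
  answer lies in \<open>(search_low B t k, search_low B t k + 2^(B-k)]\<close>.\<close>

primrec search_low :: "nat \<Rightarrow> (nat \<Rightarrow> bool) \<Rightarrow> nat \<Rightarrow> nat" where
  "search_low B t 0 = 0"
| "search_low B t (Suc k) =
     (if t (B + 2 + k) then search_low B t k else search_low B t k + 2 ^ (B - Suc k))"

definition found_id :: "nat \<Rightarrow> (nat \<Rightarrow> bool) \<Rightarrow> nat" where
  "found_id B t = search_low B t B + 1"

lemma search_low_cong:
  "(\<And>p. p < B + 2 + k \<Longrightarrow> t p = t' p) \<Longrightarrow> search_low B t k = search_low B t' k"
  by (induction k) auto

lemma first_group_cong: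
  assumes "\<And>p. p \<le> Suc B \<Longrightarrow> t p = t' p" and "\<exists>j\<le>B. t (Suc j)"
  shows "first_group t = first_group t'"
proof -
  obtain j where j: "j \<le> B" "t (Suc j)" using assms(2) by auto
  have eq: "\<And>j. j \<le> B \<Longrightarrow> t (Suc j) = t' (Suc j)" using assms(1) by simp
  let ?L = "LEAST j. t (Suc j)"
  have L1: "t (Suc ?L)" using j(2) by (rule LeastI[of "\<lambda>j. t (Suc j)"])
  have L2: "?L \<le> j" using j by (intro Least_le) simp
  show ?thesis unfolding first_group_def
  proof (rule Least_equality[symmetric])
    show "t' (Suc ?L)" using L1 L2 j eq by simp
  next
    fix y
    assume "t' (Suc y)"
    show "?L \<le> y"
    proof (rule ccontr)
      assume "\<not> ?L \<le> y"
      then have "y < ?L" by simp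
      moreover have "t (Suc y)" using \<open>t' (Suc y)\<close> eq \<open>y < ?L\<close> L2 j by simp
      ultimately show False using not_less_Least by blast
    qed
  qed
qed

locale odd_config = config +
  assumes odd_n: "odd n"
begin

abbreviation B :: nat where "B \<equiv> bit_length N"

definition chi :: "nat \<Rightarrow> int" where
  "chi i = (if c i then 1 else -1)"

definition weight :: "(nat \<Rightarrow> bool) \<Rightarrow> int" where
  "weight S = (\<Sum>i<n. if S i then chi i else 0)"

lemma signed_count_flip:
  "signed_count n (\<lambda>i. (\<not> S i) = c i) = weight (\<lambda>_. True) - 2 * weight S"
proof -
  have "signed_count n (\<lambda>i. (\<not> S i) = c i) = (\<Sum>i<n. chi i - 2 * (if S i then chi i else 0))"
    unfolding signed_count_def by (rule sum.cong) (auto simp: chi_def)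
  also have "\<dots> = weight (\<lambda>_. True) - 2 * weight S"
    by (simp add: sum_subtractf sum_distrib_left weight_def)
  finally show ?thesis .
qed

lemma rot_index_flip_eq_iff:
  "rot_index n (\<lambda>i. (\<not> S i) = c i) = rot_index n (\<lambda>i. (\<not> S' i) = c i)
     \<longleftrightarrow> int n dvd (weight S - weight S')"
proof -
  have "coprime (int n) 2" using odd_n by simp
  then have dvd2: "\<And>x. int n dvd 2 * x \<longleftrightarrow> int n dvd x"
    by (simp add: coprime_dvd_mult_right_iff)
  have "weight (\<lambda>_. True) - 2 * weight S - (weight (\<lambda>_. True) - 2 * weight S')
      = 2 * (weight S' - weight S)"
    by simp
  then show ?thesis unfolding rot_index_eq_iff[OF n_pos] signed_count_flip
    by (metis dvd2 dvd_minus_iff minus_diff_eq)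
qed

lemma common_chirality_if_dvd_weight:
  assumes "int n dvd weight (\<lambda>_. True)"
  shows "\<forall>i<n. \<forall>j<n. c i = c j"
proof -
  have "(\<forall>i<n. chi i = 1) \<or> (\<forall>i<n. chi i = -1)"
    using pm_one_sum_dvd_imp_constant[OF odd_n, of chi] assms
    by (simp add: weight_def chi_def)
  then show ?thesis by (auto simp: chi_def split: if_splits)
qed

lemma weight_common_chirality:
  assumes "\<forall>i<n. c i = c 0"
  shows "weight S = chi 0 * int (card {i. i < n \<and> S i})"
proof -
  have "\<And>i. i < n \<Longrightarrow> chi i = chi 0" using assms unfolding chi_def by metis
  then have "weight S = (\<Sum>i<n. if S i then chi 0 else 0)"
    unfolding weight_def by (intro sum.cong) (metis lessThan_iff)+
  also have "\<dots> = (\<Sum>i\<in>{i\<in>{..<n}. S i}. chi 0)"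
    by (rule sum.inter_filter[symmetric]) simp
  also have "\<dots> = (\<Sum>i\<in>{i. i < n \<and> S i}. chi 0)"
    by (rule sum.cong) auto
  finally show ?thesis by simp
qed

lemma weight_single: "k < n \<Longrightarrow> weight (\<lambda>j. j = k \<and> P j) = (if P k then chi k else 0)"
proof -
  assume "k < n"
  have "weight (\<lambda>j. j = k \<and> P j) = (\<Sum>j\<in>{..<n}. if j = k then (if P k then chi k else 0) else 0)"
    unfolding weight_def by (rule sum.cong) auto
  also have "\<dots> = (if P k then chi k else 0)" using \<open>k < n\<close> by (simp add: sum.delta)
  finally show ?thesis .
qed

definition group_weight :: "nat \<Rightarrow> int" where
  "group_weight j = weight (\<lambda>i. in_group j (idf i))"

text \<open>If the total weight vanishes modulo \<open>n\<close>, all agents share a chirality; then any bit on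
  which two IDs differ splits the agents into two nonempty groups of size less than \<open>n\<close>.\<close>

lemma exists_group_weight_ndvd: "\<exists>j\<le>B. \<not> int n dvd group_weight j"
proof (cases "int n dvd group_weight 0")
  case False
  then show ?thesis by auto
next
  case True
  then have "int n dvd weight (\<lambda>_. True)" by (simp add: group_weight_def in_group_def)
  then have same: "\<forall>i<n. c i = c 0" using common_chirality_if_dvd_weight n_pos by blast
  have "idf 0 \<noteq> idf 1" using inj_idf n_gt_4 by (auto dest: inj_onD)
  moreover have "idf 0 < 2 ^ B" "idf 1 < 2 ^ B" using idf_less_two_power n_gt_4 by auto
  ultimately obtain k where k: "k < B" "odd (idf 0 div 2 ^ k) \<noteq> odd (idf 1 div 2 ^ k)"
    using exists_bit_differs by blast
  let ?S = "\<lambda>i. in_group (Suc k) (idf i)"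
  let ?C = "{i. i < n \<and> ?S i}"
  have "?S 0 \<or> ?S 1" "\<not> (?S 0 \<and> ?S 1)" using k(2) by (simp_all add: in_group_def)
  moreover have "0 < n" "1 < n" using n_gt_4 by auto
  ultimately have "\<exists>i<n. \<not> ?S i" "\<exists>i<n. ?S i" by blast+
  then have "?C \<subset> {..<n}" "?C \<noteq> {}" by blast+
  then have "card ?C < n" "0 < card ?C"
    using psubset_card_mono[of "{..<n}" ?C] by (simp_all add: card_gt_0_iff)
  then have "\<not> n dvd card ?C" by (auto dest: dvd_imp_le)
  then have "\<not> int n dvd int (card ?C)" by simp
  moreover have "int n dvd chi 0 * x \<Longrightarrow> int n dvd x" for x
    by (cases "c 0") (auto simp: chi_def)
  ultimately have "\<not> int n dvd group_weight (Suc k)"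
    unfolding group_weight_def weight_common_chirality[OF same] by blast
  then show ?thesis using k by (intro exI[of _ "Suc k"]) auto
qed

definition prefix_weight :: "nat \<Rightarrow> nat \<Rightarrow> int" where
  "prefix_weight j x = weight (\<lambda>i. in_group j (idf i) \<and> idf i \<le> x)"

lemma prefix_weight_0: "prefix_weight j 0 = 0"
proof -
  have nz: "\<And>i. i < n \<Longrightarrow> idf i \<noteq> 0" using idf_range by fastforce
  show ?thesis unfolding prefix_weight_def weight_def by (intro sum.neutral ballI) (simp add: nz)
qed

lemma prefix_weight_top: "prefix_weight j (2 ^ B) = group_weight j"
  unfolding prefix_weight_def group_weight_def weight_def
  using idf_less_two_power by (intro sum.cong) (auto simp: less_imp_le)

lemma id_if_prefix_weight_changes:
  assumes "prefix_weight j x \<noteq> prefix_weight j (Suc x)"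
  shows "\<exists>i<n. idf i = Suc x"
proof (rule ccontr)
  assume "\<not> (\<exists>i<n. idf i = Suc x)"
  then have "prefix_weight j x = prefix_weight j (Suc x)"
    unfolding prefix_weight_def weight_def by (intro sum.cong) (auto simp: le_Suc_eq)
  then show False using assms by simp
qed

context
  fixes t :: "nat \<Rightarrow> bool"
  assumes group_answer: "\<And>j. j \<le> B \<Longrightarrow> t (Suc j) \<longleftrightarrow> \<not> int n dvd group_weight j"
    and search_answer: "\<And>k. k < B \<Longrightarrow> t (B + 2 + k) \<longleftrightarrow>
      \<not> int n dvd prefix_weight (first_group t) (search_low B t k + 2 ^ (B - Suc k))"
begin

lemma first_group_weight_ndvd: "first_group t \<le> B" "\<not> int n dvd group_weight (first_group t)"
proof -
  obtain j0 where j0: "j0 \<le> B" "t (Suc j0)"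
    using exists_group_weight_ndvd group_answer by blast
  have "t (Suc (first_group t))"
    unfolding first_group_def using j0(2) by (rule LeastI[of "\<lambda>j. t (Suc j)"])
  moreover have "first_group t \<le> j0"
    unfolding first_group_def using j0(2) by (rule Least_le[of "\<lambda>j. t (Suc j)"])
  ultimately show "first_group t \<le> B" "\<not> int n dvd group_weight (first_group t)"
    using j0 group_answer by auto
qed

lemma search_invariant:
  "k \<le> B \<Longrightarrow> int n dvd prefix_weight (first_group t) (search_low B t k)
    \<and> \<not> int n dvd prefix_weight (first_group t) (search_low B t k + 2 ^ (B - k))"
proof (induction k)
  case 0
  then show ?case using first_group_weight_ndvd by (simp add: prefix_weight_0 prefix_weight_top)
next
  case (Suc k)
  then have "k < B" by simp
  then have "2 ^ (B - k) = 2 ^ (B - Suc k) + (2::nat) ^ (B - Suc k)"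
    by (metis Suc_diff_Suc mult_2 power_Suc)
  then show ?case using Suc search_answer[OF \<open>k < B\<close>]
    by (cases "t (B + 2 + k)") (simp_all add: add.assoc)
qed

lemma found_id_exists: "\<exists>i<n. idf i = found_id B t"
proof -
  have "prefix_weight (first_group t) (search_low B t B)
      \<noteq> prefix_weight (first_group t) (Suc (search_low B t B))"
    using search_invariant[of B] by auto
  then show ?thesis unfolding found_id_def using id_if_prefix_weight_changes by simp
qed

end

end

section \<open>The algorithm\<close>

text \<open>Phase \<open>p\<close> consists of rounds \<open>2p\<close> and \<open>2p + 1\<close>; in the second round every agent reverses
  its direction, so at the start of each phase all agents are back at their initial positions.
  Observation \<open>2k\<close> of an agent then determines the rotation index of phase \<open>k\<close>, and
  \<open>changed h k\<close> compares it with phase \<open>0\<close>, in which every agent moves to its own right.\<close>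

definition changed :: "real list \<Rightarrow> nat \<Rightarrow> bool" where
  "changed h k = (h ! (2 * k) \<noteq> h ! 0)"

text \<open>Phases \<open>1 .. B + 1\<close> query the groups, phases \<open>B + 2 .. 2B + 1\<close> run the binary search, in
  phase \<open>2B + 2\<close> only the agent with the found ID moves left, and in phase \<open>2B + 3\<close> that agent
  broadcasts the bit \<open>b\<close> it observed in phase \<open>2B + 2\<close>.\<close>

definition phase_dir :: "nat \<Rightarrow> nat \<Rightarrow> nat \<Rightarrow> (nat \<Rightarrow> bool) \<Rightarrow> bool \<Rightarrow> bool" where
  "phase_dir N x p t b =
    (let B = bit_length N in
     if p = 0 then True
     else if p \<le> Suc B then \<not> in_group (p - 1) x
     else if p \<le> 2 * B + 1 then
       \<not> (in_group (first_group t) x \<and>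
          x \<le> search_low B t (p - B - 2) + 2 ^ (B - Suc (p - B - 2)))
     else if p = 2 * B + 2 then x \<noteq> found_id B t
     else \<not> (x = found_id B t \<and> b))"

definition setup_rounds :: "nat \<Rightarrow> nat" where
  "setup_rounds N = 4 * bit_length N + 8"

definition leader_phase_less :: "nat \<Rightarrow> real list \<Rightarrow> bool" where
  "leader_phase_less N h = (h ! (2 * (2 * bit_length N + 2)) < h ! 0)"

definition leader_phase_zero :: "nat \<Rightarrow> real list \<Rightarrow> bool" where
  "leader_phase_zero N h = (h ! (2 * (2 * bit_length N + 2)) = 0)"

text \<open>After the setup every agent knows the leader's ID and whether its own chirality agrees
  with the leader's; all agents then move left in the leader's orientation, except the leader.\<close>

definition walk_dir :: "nat \<Rightarrow> nat \<Rightarrow> real list \<Rightarrow> bool" where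
  "walk_dir N x h =
    (let L = found_id (bit_length N) (changed h);
         same = (if leader_phase_zero N h then x = L
                 else leader_phase_less N h = changed h (2 * bit_length N + 3))
     in x = L \<or> \<not> same)"

definition phase_move :: "nat \<Rightarrow> nat \<Rightarrow> real list \<Rightarrow> bool" where
  "phase_move N x h = phase_dir N x (length h div 2) (changed h) (leader_phase_less N h)"

definition alg_move :: "nat \<Rightarrow> nat \<Rightarrow> real list \<Rightarrow> bool" where
  "alg_move N x h =
    (if length h < setup_rounds N then
       (if even (length h) then phase_move N x h else \<not> phase_move N x (butlast h))
     else walk_dir N x (take (setup_rounds N) h))"

lemma phase_dir_cong:
  assumes "\<And>k. k < p \<Longrightarrow> t k = t' k"
    and "bit_length N + 2 \<le> p \<Longrightarrow> \<exists>j\<le>bit_length N. t (Suc j)"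
  shows "phase_dir N x p t b = phase_dir N x p t' b"
proof -
  let ?B = "bit_length N"
  have low: "\<And>k. ?B + 2 + k \<le> p \<Longrightarrow> search_low ?B t k = search_low ?B t' k"
    using assms(1) by (intro search_low_cong) auto
  have "?B + 2 \<le> p \<Longrightarrow> first_group t = first_group t'"
    using assms by (intro first_group_cong) auto
  moreover have "2 * ?B + 2 \<le> p \<Longrightarrow> found_id ?B t = found_id ?B t'"
    unfolding found_id_def using low[of ?B] by simp
  ultimately show ?thesis unfolding phase_dir_def Let_def using low[of "p - ?B - 2"] by auto
qed

context odd_config
begin

abbreviation slot_at :: "nat \<Rightarrow> nat \<Rightarrow> nat" where
  "slot_at t \<equiv> fst (run n q c idf (alg_move N) t)"

abbreviation history :: "nat \<Rightarrow> nat \<Rightarrow> real list" where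
  "history t \<equiv> snd (run n q c idf (alg_move N) t)"

definition rot :: "nat \<Rightarrow> nat" where
  "rot t = rot_index n (\<lambda>j. alg_move N (idf j) (history t j) = c j)"

lemma rot_less: "rot t < n"
  unfolding rot_def using rot_index_less n_pos by simp

lemma slot_at_Suc: "slot_at (Suc t) i = (slot_at t i + rot t) mod n"
  unfolding rot_def by (rule run_Suc_slot)

lemma history_nth:
  "k < t \<Longrightarrow> history t i ! k = owndist (c i) (q (slot_at k i)) (q ((slot_at k i + rot k) mod n))"
  using nth_run_history[of k t] slot_at_Suc by simp

lemma rot_reversed:
  assumes "Suc (2 * p) < setup_rounds N"
  shows "int (rot (Suc (2 * p))) = (- int (rot (2 * p))) mod int n"
proof -
  let ?P = "\<lambda>j. alg_move N (idf j) (history (2 * p) j) = c j"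
  have "(\<lambda>j. alg_move N (idf j) (history (Suc (2 * p)) j) = c j) = (\<lambda>j. \<not> ?P j)"
    using assms by (auto simp: alg_move_def length_run_history butlast_run_history)
  then have "int (rot (Suc (2 * p))) = signed_count n (\<lambda>j. \<not> ?P j) mod int n"
    unfolding rot_def int_rot_index[OF n_pos] by (simp only:)
  also have "\<dots> = (- int (rot (2 * p))) mod int n"
    unfolding signed_count_not rot_def int_rot_index[OF n_pos] by (simp add: mod_minus_eq)
  finally show ?thesis .
qed

lemma slot_at_phase_start: "p \<le> 2 * B + 4 \<Longrightarrow> i < n \<Longrightarrow> slot_at (2 * p) i = i"
proof (induction p)
  case 0
  then show ?case by simp
next
  case (Suc p)
  have "int (rot (2 * p) + rot (Suc (2 * p))) mod int n = 0"
    using rot_reversed[of p] Suc.prems by (simp add: setup_rounds_def mod_add_right_eq)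
  then have "(rot (2 * p) + rot (Suc (2 * p))) mod n = 0"
    by (metis of_nat_0 of_nat_eq_iff zmod_int)
  then have "(i + rot (2 * p) + rot (Suc (2 * p))) mod n = i"
    using Suc.prems by (metis add.assoc mod_add_right_eq mod_less add_0_right)
  then show ?case using Suc by (simp add: slot_at_Suc mod_add_left_eq)
qed

lemma history_phase_start:
  "k \<le> 2 * B + 4 \<Longrightarrow> 2 * k < t \<Longrightarrow> i < n \<Longrightarrow> history t i ! (2 * k) = obs i (rot (2 * k))"
  using history_nth slot_at_phase_start by (simp add: obs_def)

definition answer :: "nat \<Rightarrow> bool" where
  "answer k = (rot (2 * k) \<noteq> rot 0)"

lemma changed_history:
  assumes "k < p" "p \<le> 2 * B + 4" "i < n"
  shows "changed (history (2 * p) i) k = answer k"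
  using history_phase_start[of k "2 * p" i] history_phase_start[of 0 "2 * p" i] assms
    obs_eq_iff[OF assms(3) rot_less rot_less]
  by (simp add: changed_def answer_def)

lemma alg_move_phase:
  "p \<le> 2 * B + 3 \<Longrightarrow> alg_move N x (history (2 * p) j)
     = phase_dir N x p (changed (history (2 * p) j)) (leader_phase_less N (history (2 * p) j))"
  by (simp add: alg_move_def phase_move_def length_run_history setup_rounds_def)

lemma rot_0: "rot 0 = rot_index n (\<lambda>j. (\<not> False) = c j)"
  unfolding rot_def
  by (rule rot_index_cong) (simp add: alg_move_phase[of 0, simplified] phase_dir_def Let_def)

lemma answer_iff_weight:
  assumes "\<And>j. j < n \<Longrightarrow> alg_move N (idf j) (history (2 * p) j) = (\<not> S j)"
  shows "answer p \<longleftrightarrow> \<not> int n dvd weight S"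
proof -
  have "rot (2 * p) = rot_index n (\<lambda>j. (\<not> S j) = c j)"
    unfolding rot_def by (rule rot_index_cong) (simp add: assms)
  moreover have "weight (\<lambda>j. False) = 0" by (simp add: weight_def)
  ultimately show ?thesis
    unfolding answer_def rot_0 using rot_index_flip_eq_iff[of S "\<lambda>j. False"] by simp
qed

lemma answer_group: "j \<le> B \<Longrightarrow> answer (Suc j) \<longleftrightarrow> \<not> int n dvd group_weight j"
  unfolding group_weight_def
proof (rule answer_iff_weight)
  fix i assume "j \<le> B" "i < n"
  moreover have "phase_dir N (idf i) (Suc j) (changed (history (2 * Suc j) i)) b
      = phase_dir N (idf i) (Suc j) answer b" for b
    using \<open>j \<le> B\<close> \<open>i < n\<close> by (intro phase_dir_cong changed_history) auto
  ultimately show "alg_move N (idf i) (history (2 * Suc j) i) = (\<not> in_group j (idf i))"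
    using alg_move_phase[of "Suc j"] by (simp add: phase_dir_def Let_def)
qed

lemma phase_dir_history:
  assumes "p \<le> 2 * B + 3" "j < n"
  shows "phase_dir N x p (changed (history (2 * p) j)) b = phase_dir N x p answer b"
proof (rule phase_dir_cong)
  show "\<And>k. k < p \<Longrightarrow> changed (history (2 * p) j) k = answer k"
    using assms by (intro changed_history) auto
  assume "B + 2 \<le> p"
  obtain j' where "j' \<le> B" "answer (Suc j')"
    using exists_group_weight_ndvd answer_group by blast
  moreover have "changed (history (2 * p) j) (Suc j') = answer (Suc j')"
    using assms \<open>B + 2 \<le> p\<close> \<open>j' \<le> B\<close> by (intro changed_history) auto
  ultimately show "\<exists>j'\<le>B. changed (history (2 * p) j) (Suc j')" by auto
qed

lemma alg_move_answer:
  "p \<le> 2 * B + 3 \<Longrightarrow> j < n \<Longrightarrow>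
    alg_move N x (history (2 * p) j) = phase_dir N x p answer (leader_phase_less N (history (2 * p) j))"
  using alg_move_phase phase_dir_history by simp

lemma answer_search:
  "k < B \<Longrightarrow> answer (B + 2 + k) \<longleftrightarrow>
     \<not> int n dvd prefix_weight (first_group answer) (search_low B answer k + 2 ^ (B - Suc k))"
  unfolding prefix_weight_def
proof (rule answer_iff_weight)
  fix j assume "k < B" "j < n"
  then show "alg_move N (idf j) (history (2 * (B + 2 + k)) j) =
      (\<not> (in_group (first_group answer) (idf j) \<and> idf j \<le> search_low B answer k + 2 ^ (B - Suc k)))"
    using alg_move_answer[of "B + 2 + k" j] by (simp add: phase_dir_def Let_def)
qed

definition leader_id :: nat where
  "leader_id = found_id B answer"

definition leader :: nat where
  "leader = (SOME i. i < n \<and> idf i = leader_id)"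

lemma leader_less_n: "leader < n" and idf_leader: "idf leader = leader_id"
proof -
  have "\<exists>i<n. idf i = leader_id"
    unfolding leader_id_def using answer_group answer_search by (rule found_id_exists)
  then show "leader < n" "idf leader = leader_id"
    unfolding leader_def by (metis (mono_tags, lifting) someI_ex)+
qed

lemma idf_eq_leader_id_iff: "j < n \<Longrightarrow> idf j = leader_id \<longleftrightarrow> j = leader"
  using leader_less_n idf_leader inj_idf by (metis inj_onD lessThan_iff)

section \<open>Chirality relative to the leader\<close>

definition rot_leader_phase :: nat where
  "rot_leader_phase = rot (2 * (2 * B + 2))"

definition sees_less :: "nat \<Rightarrow> bool" where
  "sees_less j = (obs j rot_leader_phase < obs j (rot 0))"

lemma rot_leader_phase_eq: "rot_leader_phase = rot_index n (\<lambda>j. (\<not> j = leader) = c j)"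
  unfolding rot_leader_phase_def rot_def
proof (rule rot_index_cong)
  fix j assume "j < n"
  then show "(alg_move N (idf j) (history (2 * (2 * B + 2)) j) = c j) = ((\<not> j = leader) = c j)"
    using alg_move_answer[of "2 * B + 2" j] idf_eq_leader_id_iff
    by (simp add: phase_dir_def Let_def leader_id_def)
qed

lemma leader_phase_history:
  assumes "2 * B + 2 < p" "p \<le> 2 * B + 4" "j < n"
  shows "leader_phase_less N (history (2 * p) j) = sees_less j"
    and "leader_phase_zero N (history (2 * p) j) = (rot_leader_phase = 0)"
proof -
  have "history (2 * p) j ! (2 * (2 * B + 2)) = obs j rot_leader_phase"
    "history (2 * p) j ! (2 * 0) = obs j (rot (2 * 0))"
    unfolding rot_leader_phase_def using assms by (intro history_phase_start; simp)+
  then show "leader_phase_less N (history (2 * p) j) = sees_less j"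
    "leader_phase_zero N (history (2 * p) j) = (rot_leader_phase = 0)"
    using obs_eq_0_iff[OF assms(3)] rot_less
    by (simp_all add: leader_phase_less_def leader_phase_zero_def sees_less_def rot_leader_phase_def)
qed

lemma answer_broadcast: "answer (2 * B + 3) \<longleftrightarrow> sees_less leader"
proof -
  have "answer (2 * B + 3) \<longleftrightarrow> \<not> int n dvd weight (\<lambda>j. j = leader \<and> sees_less j)"
  proof (rule answer_iff_weight)
    fix j assume "j < n"
    then show "alg_move N (idf j) (history (2 * (2 * B + 3)) j) = (\<not> (j = leader \<and> sees_less j))"
      using alg_move_answer[of "2 * B + 3" j] idf_eq_leader_id_iff leader_phase_history[of "2 * B + 3" j]
      by (simp add: phase_dir_def Let_def leader_id_def)
  qed
  also have "\<dots> \<longleftrightarrow> sees_less leader"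
    using weight_single[OF leader_less_n] n_gt_4 by (auto simp: chi_def)
  finally show ?thesis .
qed

text \<open>If only the leader's move changes the rotation index to \<open>0\<close>, the signs \<open>\<plusminus>1\<close> of all
  agents, the leader's negated, agree: everybody else has the opposite chirality.\<close>

lemma opposite_chirality_if_rot_leader_phase_0:
  assumes "rot_leader_phase = 0" "j < n" "j \<noteq> leader"
  shows "c j \<noteq> c leader"
proof -
  let ?w = "\<lambda>k. if k = leader then - chi leader else chi k"
  have "signed_count n (\<lambda>k. (\<not> k = leader) = c k) = (\<Sum>k<n. ?w k)"
    unfolding signed_count_def by (rule sum.cong) (auto simp: chi_def)
  moreover have "int n dvd signed_count n (\<lambda>k. (\<not> k = leader) = c k)"
    using assms(1) rot_leader_phase_eq rot_index_eq_0_iff[OF n_pos] by simp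
  ultimately have "int n dvd (\<Sum>k<n. ?w k)" by simp
  moreover have "\<forall>k<n. ?w k = 1 \<or> ?w k = -1" by (auto simp: chi_def)
  ultimately have "(\<forall>k<n. ?w k = 1) \<or> (\<forall>k<n. ?w k = -1)"
    by (intro pm_one_sum_dvd_imp_constant[OF odd_n])
  then have "?w j = ?w leader"
    using assms(2) leader_less_n by (elim disjE) (metis (no_types, lifting))+
  then have "chi j = - chi leader" using assms(3) by simp
  then show ?thesis by (auto simp: chi_def split: if_splits)
qed

lemma rot_0_ne_0_if_chiralities_differ:
  assumes "i < n" "j < n" "c i \<noteq> c j"
  shows "rot 0 \<noteq> 0"
proof
  assume "rot 0 = 0"
  then have "int n dvd weight (\<lambda>_. True)"
    using rot_0 rot_index_eq_0_iff[OF n_pos] signed_count_flip[of "\<lambda>j. False"]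
    by (simp add: weight_def)
  then show False using common_chirality_if_dvd_weight assms by blast
qed

lemma rot_leader_phase_ne_rot_0: "rot_leader_phase \<noteq> rot 0"
proof
  assume "rot_leader_phase = rot 0"
  then have "int n dvd (weight (\<lambda>k. k = leader) - weight (\<lambda>k. False))"
    unfolding rot_leader_phase_eq rot_0 rot_index_flip_eq_iff[symmetric] by simp
  moreover have "weight (\<lambda>k. k = leader) = chi leader"
    using weight_single[OF leader_less_n, of "\<lambda>_. True"] by simp
  ultimately have "int n dvd chi leader" by (simp add: weight_def)
  then show False using n_gt_4 by (cases "c leader") (auto simp: chi_def)
qed

text \<open>An agent of the same chirality as the leader sees the same order of the two rotations;
  one of the opposite chirality sees the shifts \<open>r\<close> as \<open>n - r\<close>, hence the reverse order.\<close>

lemma sees_less_eq_leader_iff: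
  assumes "j < n" "rot_leader_phase \<noteq> 0"
  shows "sees_less j = sees_less leader \<longleftrightarrow> c j = c leader"
proof (cases "c j = c leader")
  case True
  then have "own_shift j = own_shift leader" by (auto simp: own_shift_def)
  then show ?thesis using True
    by (simp add: sees_less_def obs_less_iff[OF assms(1) rot_less rot_less]
        obs_less_iff[OF leader_less_n rot_less rot_less] rot_leader_phase_def)
next
  case False
  have r0: "rot 0 \<noteq> 0" using rot_0_ne_0_if_chiralities_differ[OF assms(1) leader_less_n False] .
  have rl: "rot_leader_phase < n" "rot 0 < n" using rot_less rot_leader_phase_def by auto
  have flip: "\<And>r. r < n \<Longrightarrow> r \<noteq> 0 \<Longrightarrow>
      own_shift j r = n - own_shift leader r \<and> 0 < own_shift leader r \<and> own_shift leader r < n"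
    using False by (auto simp: own_shift_def mod_if)
  have ne: "own_shift leader rot_leader_phase \<noteq> own_shift leader (rot 0)"
    using own_shift_inj[OF rl] rot_leader_phase_ne_rot_0 by blast
  have "sees_less j = (own_shift j rot_leader_phase < own_shift j (rot 0))"
    unfolding sees_less_def using obs_less_iff[OF assms(1) rl] .
  also have "\<dots> = (own_shift leader (rot 0) < own_shift leader rot_leader_phase)"
    using flip[OF rl(1) assms(2)] flip[OF rl(2) r0] by auto
  also have "\<dots> = (\<not> sees_less leader)"
    unfolding sees_less_def using obs_less_iff[OF leader_less_n rl] ne by auto
  finally show ?thesis using False by auto
qed

definition walk_choice :: "nat \<Rightarrow> bool" where
  "walk_choice j = (j = leader \<or> c j \<noteq> c leader)"

lemma walk_dir_history:
  assumes "j < n"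
  shows "walk_dir N (idf j) (history (setup_rounds N) j) = walk_choice j"
proof -
  have T: "setup_rounds N = 2 * (2 * B + 4)" by (simp add: setup_rounds_def)
  have ch: "\<And>k. k < 2 * B + 4 \<Longrightarrow> changed (history (setup_rounds N) j) k = answer k"
    unfolding T using assms by (intro changed_history) auto
  then have "found_id B (changed (history (setup_rounds N) j)) = leader_id"
    unfolding leader_id_def found_id_def by (subst search_low_cong[of B _ _ answer]) auto
  moreover have "leader_phase_less N (history (setup_rounds N) j) = sees_less j"
    "leader_phase_zero N (history (setup_rounds N) j) = (rot_leader_phase = 0)"
    unfolding T using leader_phase_history[of "2 * B + 4" j] assms by auto
  moreover have "changed (history (setup_rounds N) j) (2 * B + 3) = sees_less leader"
    using ch[of "2 * B + 3"] answer_broadcast by simp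
  ultimately show ?thesis
    using idf_eq_leader_id_iff[OF assms] opposite_chirality_if_rot_leader_phase_0[OF _ assms]
      sees_less_eq_leader_iff[OF assms]
    by (auto simp: walk_dir_def walk_choice_def Let_def)
qed

section \<open>The walk\<close>

definition walk_rot :: nat where
  "walk_rot = rot_index n (\<lambda>j. walk_choice j = c j)"

definition walk_slot :: "nat \<Rightarrow> nat \<Rightarrow> nat" where
  "walk_slot i m = (i + m * walk_rot) mod n"

lemma walk_slot_less: "walk_slot i m < n"
  unfolding walk_slot_def using n_pos by simp

lemma walk_slot_add: "walk_slot (walk_slot i a) d = walk_slot i (a + d)"
proof -
  have "walk_slot (walk_slot i a) d = (i + a * walk_rot + d * walk_rot) mod n"
    unfolding walk_slot_def by (rule mod_add_left_eq)
  then show ?thesis unfolding walk_slot_def by (simp add: algebra_simps)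
qed

lemma rot_walk: "setup_rounds N \<le> t \<Longrightarrow> rot t = walk_rot"
  unfolding rot_def walk_rot_def
proof (rule rot_index_cong)
  fix j assume "setup_rounds N \<le> t" "j < n"
  then have "alg_move N (idf j) (history t j) = walk_dir N (idf j) (history (setup_rounds N) j)"
    by (simp add: alg_move_def length_run_history take_run_history)
  then show "(alg_move N (idf j) (history t j) = c j) = (walk_choice j = c j)"
    using walk_dir_history[OF \<open>j < n\<close>] by simp
qed

lemma slot_at_walk: "i < n \<Longrightarrow> slot_at (setup_rounds N + m) i = walk_slot i m"
proof (induction m)
  case 0
  then show ?case
    using slot_at_phase_start[of "2 * B + 4" i] by (simp add: setup_rounds_def walk_slot_def)
next
  case (Suc m)
  then show ?case using rot_walk[of "setup_rounds N + m"] walk_slot_add[of i m 1]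
    by (simp add: slot_at_Suc walk_slot_def)
qed

lemma history_walk:
  "i < n \<Longrightarrow> setup_rounds N + l < t \<Longrightarrow>
    history t i ! (setup_rounds N + l) = owndist (c i) (q (walk_slot i l)) (q (walk_slot i (Suc l)))"
  using history_nth slot_at_walk rot_walk walk_slot_add[of i l 1] by (simp add: walk_slot_def)

text \<open>During the walk the leader moves clockwise in its own orientation and all other agents
  anticlockwise in it, so the rotation index is \<open>\<plusminus>2\<close> modulo \<open>n\<close>, which is coprime to the odd
  number \<open>n\<close>.\<close>

lemma coprime_walk_rot: "coprime walk_rot n"
proof -
  have "signed_count n (\<lambda>j. walk_choice j = c j)
      = (\<Sum>j<n. - chi leader + (if j = leader then 2 * chi leader else 0))"
    unfolding signed_count_def by (rule sum.cong) (auto simp: walk_choice_def chi_def)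
  also have "\<dots> = 2 * chi leader + (- chi leader) * int n"
    using leader_less_n by (simp add: sum.distrib sum_subtractf sum.delta)
  finally have "int walk_rot = (2 * chi leader + (- chi leader) * int n) mod int n"
    unfolding walk_rot_def int_rot_index[OF n_pos] by simp
  then have "int walk_rot = (2 * chi leader) mod int n"
    by (simp only: mod_mult_self1)
  moreover have "coprime (2 * chi leader) (int n)"
    using odd_n by (cases "c leader") (simp_all add: chi_def)
  then have "coprime ((2 * chi leader) mod int n) (int n)" using n_pos by simp
  ultimately have "coprime (int walk_rot) (int n)" by simp
  then show ?thesis by simp
qed

lemma walk_slot_eq_self_iff: "i < n \<Longrightarrow> walk_slot i m = i \<longleftrightarrow> n dvd m"
proof -
  assume "i < n"
  have "walk_slot i m = i \<longleftrightarrow> int ((i + m * walk_rot) mod n) = int i"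
    by (simp add: walk_slot_def)
  also have "\<dots> \<longleftrightarrow> (int i + int (m * walk_rot)) mod int n = int i mod int n"
    using \<open>i < n\<close> by (simp add: zmod_int)
  also have "\<dots> \<longleftrightarrow> int n dvd int (m * walk_rot)"
    by (simp add: mod_eq_dvd_iff)
  also have "\<dots> \<longleftrightarrow> n dvd m * walk_rot"
    by (rule of_nat_dvd_iff)
  also have "\<dots> \<longleftrightarrow> n dvd m"
    using coprime_walk_rot by (simp add: coprime_dvd_mult_left_iff coprime_commute)
  finally show ?thesis .
qed

lemma walk_slot_ne_self: "i < n \<Longrightarrow> 0 < m \<Longrightarrow> m < n \<Longrightarrow> walk_slot i m \<noteq> i"
  using walk_slot_eq_self_iff nat_dvd_not_less by blast

lemma inj_on_walk_slot: "inj_on (walk_slot i) {..<n}"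
proof -
  have less: "a = b" if "a < b" "b < n" "walk_slot i a = walk_slot i b" for a b
  proof -
    have "walk_slot (walk_slot i a) (b - a) = walk_slot i a"
      using walk_slot_add[of i a "b - a"] that by simp
    then show ?thesis using walk_slot_ne_self[OF walk_slot_less] that by auto
  qed
  show ?thesis
  proof (rule inj_onI)
    fix a b assume "a \<in> {..<n}" "b \<in> {..<n}" "walk_slot i a = walk_slot i b"
    then show "a = b" using less[of a b] less[of b a] by (cases a b rule: linorder_cases) auto
  qed
qed

lemma walk_slot_image: "i < n \<Longrightarrow> walk_slot i ` {0<..<n} = {j. j < n \<and> j \<noteq> i}"
proof -
  assume "i < n"
  have "walk_slot i ` {0<..<n} \<subseteq> {j. j < n \<and> j \<noteq> i}"
    using walk_slot_ne_self[OF \<open>i < n\<close>] walk_slot_less by auto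
  moreover have "card (walk_slot i ` {0<..<n}) = n - 1"
    by (subst card_image[OF inj_on_subset[OF inj_on_walk_slot]]) auto
  moreover have "{j. j < n \<and> j \<noteq> i} = {..<n} - {i}" by auto
  then have "card {j. j < n \<and> j \<noteq> i} = n - 1" using \<open>i < n\<close> by simp
  ultimately show ?thesis by (intro card_subset_eq) auto
qed

text \<open>The agent's observations during the walk are its successive displacements, so their sum,
  taken modulo \<open>1\<close>, is the distance from its initial position to its current one.\<close>

lemma frac_sum_walk_history:
  assumes "i < n" "m \<le> k"
  shows "frac (sum_list (take m (drop (setup_rounds N) (history (setup_rounds N + k) i))))
    = owndist (c i) (q i) (q (walk_slot i m))"
proof -
  let ?p = "\<lambda>l. oriented (c i) (q (walk_slot i l))"
  have "sum_list (take m (drop (setup_rounds N) (history (setup_rounds N + k) i)))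
      = (\<Sum>l<m. history (setup_rounds N + k) i ! (setup_rounds N + l))"
    using assms by (intro sum_list_take_drop) (simp add: length_run_history)
  also have "\<dots> = (\<Sum>l<m. frac (?p (Suc l) - ?p l))"
    using assms by (intro sum.cong) (auto simp: history_walk owndist_oriented oriented_diff)
  finally have "frac (sum_list (take m (drop (setup_rounds N) (history (setup_rounds N + k) i))))
      = frac (\<Sum>l<m. ?p (Suc l) - ?p l)"
    using frac_sum_frac by simp
  also have "\<dots> = frac (?p m - ?p 0)"
    using sum_lessThan_telescope[of ?p m] by simp
  finally show ?thesis using assms(1)
    by (simp add: owndist_oriented oriented_diff walk_slot_def)
qed

lemma frac_sum_walk:
  "i < n \<Longrightarrow> frac (sum_list (drop (setup_rounds N) (history (setup_rounds N + k) i)))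
    = owndist (c i) (q i) (q (walk_slot i k))"
  using frac_sum_walk_history[of i k k] by (simp add: length_run_history)

end

definition leader_out :: "nat \<Rightarrow> nat \<Rightarrow> real list \<Rightarrow> bool option" where
  "leader_out N x h =
    (if length h = 4 * bit_length N + 4 then Some (x = found_id (bit_length N) (changed h)) else None)"

definition move_out :: "nat \<Rightarrow> nat \<Rightarrow> real list \<Rightarrow> bool option" where
  "move_out N x h = (if length h = setup_rounds N then Some (walk_dir N x h) else None)"

text \<open>An agent ends its walk as soon as it is back at its initial position, which happens after
  exactly \<open>n\<close> rounds; the partial sums of its walk observations are the positions it passed.\<close>

definition location_out :: "nat \<Rightarrow> nat \<Rightarrow> real list \<Rightarrow> real set option" where
  "location_out N x h =
    (let w = drop (setup_rounds N) h in
     if w \<noteq> [] \<and> frac (sum_list w) = 0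
     then Some {frac (sum_list (take m w)) | m. 0 < m \<and> m < length w} else None)"

context odd_config
begin

lemma leader_decides:
  "i < n \<Longrightarrow> decides n q c idf (alg_move N) (leader_out N) (setup_rounds N) i (idf i = leader_id)"
proof -
  assume "i < n"
  then have "\<And>k. k < 2 * B + 2 \<Longrightarrow> changed (history (2 * (2 * B + 2)) i) k = answer k"
    by (intro changed_history) auto
  then have "found_id B (changed (history (2 * (2 * B + 2)) i)) = leader_id"
    unfolding leader_id_def found_id_def by (subst search_low_cong[of B _ _ answer]) auto
  then show ?thesis unfolding decides_def hist_def
    by (intro exI[of _ "2 * (2 * B + 2)"])
      (auto simp: leader_out_def length_run_history setup_rounds_def)
qed

lemma leader_solution:
  "\<exists>dec. (\<forall>i<n. decides n q c idf (alg_move N) (leader_out N) (setup_rounds N) i (dec i))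
     \<and> leader_spec n q c dec"
proof (intro exI conjI allI impI)
  fix i assume "i < n"
  then show "decides n q c idf (alg_move N) (leader_out N) (setup_rounds N) i (idf i = leader_id)"
    by (rule leader_decides)
next
  have "{i. i < n \<and> idf i = leader_id} = {leader}"
    using leader_less_n idf_leader idf_eq_leader_id_iff by auto
  then show "leader_spec n q c (\<lambda>i. idf i = leader_id)" by (simp add: leader_spec_def)
qed

lemma move_decides:
  "i < n \<Longrightarrow> decides n q c idf (alg_move N) (move_out N) (setup_rounds N) i (walk_choice i)"
  unfolding decides_def hist_def
  by (intro exI[of _ "setup_rounds N"]) (auto simp: move_out_def length_run_history walk_dir_history)

lemma walk_choice_nontrivial: "nontrivial_move_spec n q c walk_choice"
proof -
  have "walk_rot \<noteq> 0"
  proof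
    assume "walk_rot = 0"
    then have "n = 1" using coprime_walk_rot by simp
    then show False using n_gt_4 by simp
  qed
  moreover have "2 * walk_rot \<noteq> n" using odd_n by (metis dvd_triv_left)
  ultimately show ?thesis by (simp add: nontrivial_move_spec_def nontrivial_index_def walk_rot_def)
qed

lemma move_solution:
  "\<exists>dec. (\<forall>i<n. decides n q c idf (alg_move N) (move_out N) (setup_rounds N) i (dec i))
     \<and> nontrivial_move_spec n q c dec"
  using move_decides walk_choice_nontrivial by (intro exI[of _ walk_choice]) simp

lemma location_decides:
  assumes "i < n"
  shows "decides n q c idf (alg_move N) (location_out N) (setup_rounds N + n) i
    {owndist (c i) (q i) (q j) | j. j < n \<and> j \<noteq> i}"
proof -
  let ?w = "drop (setup_rounds N) (history (setup_rounds N + n) i)"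
  have silent: "location_out N (idf i) (history t i) = None" if "t < setup_rounds N + n" for t
  proof (cases "setup_rounds N < t")
    case True
    define k where "k = t - setup_rounds N"
    then have t: "t = setup_rounds N + k" and "0 < k" "k < n" using True that by auto
    then have "walk_slot i k \<noteq> i" using walk_slot_ne_self[OF assms] by simp
    then have "frac (sum_list (drop (setup_rounds N) (history t i))) \<noteq> 0"
      unfolding t frac_sum_walk[OF assms] using owndist_eq_0_iff[OF assms walk_slot_less] by auto
    then show ?thesis by (simp add: location_out_def Let_def del: frac_eq_0_iff)
  qed (simp add: location_out_def Let_def length_run_history)
  have "walk_slot i n = i" using walk_slot_eq_self_iff[OF assms] by simp
  then have home: "frac (sum_list ?w) = 0"
    using frac_sum_walk[OF assms, of n] by (simp add: owndist_def cwdist_def)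
  have "{frac (sum_list (take m ?w)) | m. 0 < m \<and> m < n}
      = (\<lambda>m. frac (sum_list (take m ?w))) ` {0<..<n}"
    by auto
  also have "\<dots> = (\<lambda>m. owndist (c i) (q i) (q (walk_slot i m))) ` {0<..<n}"
    using frac_sum_walk_history[OF assms] by (intro image_cong) auto
  also have "\<dots> = (\<lambda>j. owndist (c i) (q i) (q j)) ` walk_slot i ` {0<..<n}"
    by (simp add: image_image)
  also have "\<dots> = {owndist (c i) (q i) (q j) | j. j < n \<and> j \<noteq> i}"
    unfolding walk_slot_image[OF assms] by auto
  finally have "location_out N (idf i) (history (setup_rounds N + n) i)
      = Some {owndist (c i) (q i) (q j) | j. j < n \<and> j \<noteq> i}"
    using home n_pos by (simp add: location_out_def Let_def length_run_history)
  then show ?thesis unfolding decides_def hist_def using silent by blast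
qed

lemma location_solution:
  "\<exists>dec. (\<forall>i<n. decides n q c idf (alg_move N) (location_out N) (setup_rounds N + n) i (dec i))
     \<and> location_spec n q c dec"
  using location_decides unfolding location_spec_def
  by (intro exI[of _ "\<lambda>i. {owndist (c i) (q i) (q j) | j. j < n \<and> j \<noteq> i}"]) simp

end

lemma setup_rounds_le_log: "5 \<le> N \<Longrightarrow> setup_rounds N \<le> nat \<lceil>10 * log 2 (real N)\<rceil>"
proof -
  assume "5 \<le> N"
  then have "2 \<le> log 2 (real N)" using le_log2_of_power[of 2 N] by simp
  then have "real (setup_rounds N) \<le> 10 * log 2 (real N)"
    using bit_length_le_log[OF \<open>5 \<le> N\<close>] by (simp add: setup_rounds_def)
  then show ?thesis by linarith
qed

lemma decides_mono:
  "decides n q c idf mv out T i v \<Longrightarrow> T \<le> T' \<Longrightarrow> decides n q c idf mv out T' i v"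
  unfolding decides_def by (meson order_trans)

lemma solves_oddI:
  assumes "\<And>N n q c idf. valid_config N n q idf \<Longrightarrow> odd n \<Longrightarrow>
      \<exists>dec. (\<forall>i<n. decides n q c idf (mv N) (out N) (T N n) i (dec i)) \<and> spec n q c dec"
    and "\<And>N n. 5 \<le> N \<Longrightarrow> T N n \<le> bound N n"
  shows "solves_odd mv out spec bound"
  unfolding solves_odd_def
proof (intro allI impI, elim conjE)
  fix N n q c idf assume "valid_config N n q idf" "odd n"
  then obtain dec where dec: "\<forall>i<n. decides n q c idf (mv N) (out N) (T N n) i (dec i)"
    and "spec n q c dec"
    using assms(1) by blast
  have "T N n \<le> bound N n" using assms(2) \<open>valid_config N n q idf\<close> by (simp add: valid_config_def)
  then have "\<forall>i<n. decides n q c idf (mv N) (out N) (bound N n) i (dec i)"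
    using dec by (blast intro: decides_mono)
  then show "\<exists>dec. (\<forall>i<n. decides n q c idf (mv N) (out N) (bound N n) i (dec i)) \<and> spec n q c dec"
    using \<open>spec n q c dec\<close> by blast
qed

lemma odd_configI: "valid_config N n q idf \<Longrightarrow> odd n \<Longrightarrow> odd_config N n q idf"
  by (simp add: odd_config_def odd_config_axioms_def config_def)

theorem leader_election_log_rounds:
  "solves_odd alg_move leader_out leader_spec (\<lambda>N n. nat \<lceil>10 * log 2 (real N)\<rceil>)"
  by (rule solves_oddI[OF odd_config.leader_solution[OF odd_configI] setup_rounds_le_log])

theorem nontrivial_move_log_rounds:
  "solves_odd alg_move move_out nontrivial_move_spec (\<lambda>N n. nat \<lceil>10 * log 2 (real N)\<rceil>)"
  by (rule solves_oddI[OF odd_config.move_solution[OF odd_configI] setup_rounds_le_log])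

theorem location_discovery_n_plus_log_rounds:
  "solves_odd alg_move location_out location_spec (\<lambda>N n. n + nat \<lceil>10 * log 2 (real N)\<rceil>)"
proof (rule solves_oddI[OF odd_config.location_solution[OF odd_configI]])
  fix N n :: nat
  assume "5 \<le> N"
  then show "setup_rounds N + n \<le> n + nat \<lceil>10 * log 2 (real N)\<rceil>"
    using setup_rounds_le_log[of N] by linarith
qed

theorem corollary3:
  shows "(\<exists>C::real. \<exists>mv (out :: nat \<Rightarrow> nat \<Rightarrow> real list \<Rightarrow> bool option).
            solves_odd mv out leader_spec (\<lambda>N n. nat \<lceil>C * log 2 (real N)\<rceil>))
       \<and> (\<exists>C::real. \<exists>mv (out :: nat \<Rightarrow> nat \<Rightarrow> real list \<Rightarrow> bool option).
            solves_odd mv out nontrivial_move_spec (\<lambda>N n. nat \<lceil>C * log 2 (real N)\<rceil>))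
       \<and> (\<exists>C::real. \<exists>mv (out :: nat \<Rightarrow> nat \<Rightarrow> real list \<Rightarrow> real set option).
            solves_odd mv out location_spec (\<lambda>N n. n + nat \<lceil>C * log 2 (real N)\<rceil>))"
  using leader_election_log_rounds nontrivial_move_log_rounds location_discovery_n_plus_log_rounds
  by (intro conjI exI)

end
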